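(* Let $b\in\mathbb{N}\setminus\{1\}$, $\xi_m\in\{-1,+1\}$ ($m\in\mathbb{Z}_+$) arbitrary, $\phi:\mathbb{R}\to\mathbb{R}$ periodic with period $1$, vanishing on $\mathbb{Z}$, and H\"older continuous with exponent $\gamma\in(0,1]$, and $\psi:(0,\infty)\to(0,\infty)$ submultiplicative with $\psi(b^{-1})\in(0,1)$. Let $f(t)=\sum_{m=0}^\infty \xi_m\psi(b^{-m})\phi(b^mt)$, $t\in[0,1]$. Then for each $n\in\mathbb{N}$ and $p\ge1$, \[ V^{p,1}_n(f)=b^n\,\mathbb{E}\Big(\Big|\sum_{m=1}^n\xi_{n-m}\psi(b^{m-n})b^{-m}Y_m\Big|^p\Big). \] If in addition $\psi$ is multiplicative, then for each $n\in\mathbb{N}$ and $p\ge1$, \[ V^{p,1}_n(f)=\big((\psi(b^{-1}))^pb\big)^n\,\mathbb{E}\Big(\Big|\sum_{m=1}^n\xi_{n-m}(\psi(b^{-1})b)^{-m}Y_m\Big|^p\Big). \]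
   Context: $\psi$ submultiplicative: $\psi(xy)\le\psi(x)\psi(y)$ for $x,y>0$; multiplicative: equality holds. For a function $g$ on $[0,1]$ (extended by $g(s):=g(1)$ for $s>1$), $t\in[0,1]$, $n\in\mathbb{N}$, $p\ge1$: $V^{p,t}_n(g):=\sum_{k=0}^{\lfloor tb^n\rfloor}|g((k+1)b^{-n})-g(kb^{-n})|^p$. For $m\in\mathbb{N}$, $k\in\{0,\dots,b^m-1\}$ let $\lambda_{m,k}:=b^m(\phi((k+1)b^{-m})-\phi(kb^{-m}))$. Let $(U_n)_{n\in\mathbb{N}}$ be i.i.d. random variables uniformly distributed on $\{0,1,\dots,b-1\}$, and for $m\in\mathbb{N}$ let $R_m:=\sum_{i=1}^m U_ib^{i-1}$ and $Y_m:=\lambda_{m,R_m}$. *)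

theory Defs
  imports "HOL-Analysis.Analysis" "HOL-Probability.Probability"
begin

text \<open>Discrete p-variation with time horizon t at level n of g on [0,1];
  g is extended by g(s) := g(1) for s > 1 (realised via min 1).\<close>
definition pvar :: "nat \<Rightarrow> real \<Rightarrow> real \<Rightarrow> nat \<Rightarrow> (real \<Rightarrow> real) \<Rightarrow> real" where
  "pvar b p t n g =
     (\<Sum>k\<in>{0..nat \<lfloor>t * real b ^ n\<rfloor>}.
        \<bar>g (min 1 ((real k + 1) / real b ^ n)) - g (min 1 (real k / real b ^ n))\<bar> powr p)"

definition lam :: "nat \<Rightarrow> (real \<Rightarrow> real) \<Rightarrow> nat \<Rightarrow> nat \<Rightarrow> real" where
  "lam b \<phi> m k = real b ^ m * (\<phi> ((real k + 1) / real b ^ m) - \<phi> (real k / real b ^ m))"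

definition Rnd :: "nat \<Rightarrow> nat \<Rightarrow> (nat \<Rightarrow> nat) \<Rightarrow> nat" where
  "Rnd b m U = (\<Sum>i=1..m. U i * b ^ (i - 1))"

definition Yrv :: "nat \<Rightarrow> (real \<Rightarrow> real) \<Rightarrow> nat \<Rightarrow> (nat \<Rightarrow> nat) \<Rightarrow> real" where
  "Yrv b \<phi> m U = lam b \<phi> m (Rnd b m U)"

definition Ulaw :: "nat \<Rightarrow> nat \<Rightarrow> (nat \<Rightarrow> nat) pmf" where
  "Ulaw b n = Pi_pmf {1..n} 0 (\<lambda>_. pmf_of_set {0..<b})"

definition fser :: "nat \<Rightarrow> (nat \<Rightarrow> real) \<Rightarrow> (real \<Rightarrow> real) \<Rightarrow> (real \<Rightarrow> real) \<Rightarrow> real \<Rightarrow> real" where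
  "fser b \<xi> \<psi> \<phi> t = (\<Sum>m. \<xi> m * \<psi> (1 / real b ^ m) * \<phi> (real b ^ m * t))"

end

theory Submission
  imports Defs
begin

(* At a grid point k b^-n every term of the series with m >= n vanishes, since phi vanishes
   on the integers; so no convergence, Hoelder or sign hypothesis is needed, and the increment
   of f over [k b^-n, (k+1) b^-n] is the finite sum over m = 1..n of
   xi_(n-m) psi(b^(m-n)) b^-m lambda_(m,k).  By periodicity lambda_(m,k) depends only on
   k mod b^m.  The number R_n with base-b digits U_1, ..., U_n is uniform on {0, ..., b^n - 1}
   and R_m = R_n mod b^m, so the sum over k of the p-th powers of the increments is b^n times
   the expectation.  If psi is multiplicative then psi(b^-k) = psi(b^-1)^k, and the factor
   psi(b^-1)^n comes out of the sum. *)

lemma Rnd_Suc: "Rnd b (Suc n) U = Rnd b n U + U (Suc n) * b ^ n"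
  by (simp add: Rnd_def)

lemma Rnd_less:
  assumes "\<And>i. i \<in> {1..n} \<Longrightarrow> U i < b"
  shows "Rnd b n U < b ^ n"
  using assms
proof (induction n)
  case 0
  then show ?case by (simp add: Rnd_def)
next
  case (Suc n)
  have "Rnd b (Suc n) U < b ^ n + U (Suc n) * b ^ n"
    using Suc by (simp add: Rnd_Suc)
  also have "\<dots> \<le> b ^ Suc n"
    using Suc.prems[of "Suc n"] mult_le_mono1[of "Suc (U (Suc n))" b "b ^ n"] by simp
  finally show ?case .
qed

lemma Rnd_mod_power:
  assumes "m \<le> n" and "\<And>i. i \<in> {1..m} \<Longrightarrow> U i < b"
  shows "Rnd b n U mod b ^ m = Rnd b m U"
  using assms(1)
proof (induction n rule: dec_induct)
  case base
  show ?case using Rnd_less[OF assms(2)] by simp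
next
  case (step n)
  have "b ^ m dvd U (Suc n) * b ^ n"
    using step.hyps(1) by (simp add: le_imp_power_dvd)
  then show ?case
    using step.IH Rnd_less[OF assms(2)] by (simp add: Rnd_Suc mod_add_eq[symmetric])
qed

lemma Rnd_digit:
  assumes "i \<in> {1..n}" and "\<And>j. j \<in> {1..n} \<Longrightarrow> U j < b"
  shows "U i = Rnd b n U mod b ^ i div b ^ (i - 1)"
proof -
  obtain j where i: "i = Suc j" using assms(1) by (cases i) auto
  have "Rnd b n U mod b ^ i = Rnd b i U"
    using assms by (intro Rnd_mod_power) auto
  also have "\<dots> = Rnd b j U + U i * b ^ j"
    by (simp add: i Rnd_Suc)
  finally have "Rnd b n U mod b ^ i = Rnd b j U + U i * b ^ j" .
  moreover have "Rnd b j U < b ^ j"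
    using assms i by (intro Rnd_less) auto
  moreover have "b > 0"
    using assms by fastforce
  ultimately show ?thesis by (simp add: i)
qed

lemma bij_betw_Rnd: "bij_betw (Rnd b n) (PiE_dflt {1..n} 0 (\<lambda>_. {0..<b})) {0..<b ^ n}"
proof -
  let ?D = "PiE_dflt {1..n} 0 (\<lambda>_. {0..<b})"
  have inj: "inj_on (Rnd b n) ?D"
  proof (rule inj_onI)
    fix U V assume U: "U \<in> ?D" and V: "V \<in> ?D" and eq: "Rnd b n U = Rnd b n V"
    show "U = V"
    proof
      fix i
      show "U i = V i"
      proof (cases "i \<in> {1..n}")
        case True
        then show ?thesis
          using U V eq Rnd_digit[OF True, of U b] Rnd_digit[OF True, of V b]
          by (simp add: PiE_dflt_def)
      next
        case False
        then show ?thesis using U V by (simp add: PiE_dflt_def)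
      qed
    qed
  qed
  have "Rnd b n ` ?D \<subseteq> {0..<b ^ n}"
    by (auto simp: PiE_dflt_def intro!: Rnd_less)
  moreover have "card (Rnd b n ` ?D) = card {0..<b ^ n}"
    using inj by (simp add: card_image card_PiE_dflt)
  ultimately have "Rnd b n ` ?D = {0..<b ^ n}"
    by (simp add: card_subset_eq)
  with inj show ?thesis by (simp add: bij_betw_def)
qed

lemma map_Rnd_Ulaw:
  assumes "b > 0"
  shows "map_pmf (Rnd b n) (Ulaw b n) = pmf_of_set {0..<b ^ n}"
proof -
  have "Ulaw b n = pmf_of_set (PiE_dflt {1..n} 0 (\<lambda>_. {0..<b}))"
    unfolding Ulaw_def using assms by (simp add: Pi_pmf_of_set)
  also have "map_pmf (Rnd b n) \<dots> = pmf_of_set {0..<b ^ n}"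
    using assms bij_betw_Rnd[of b n]
    by (subst map_pmf_of_set_inj) (auto simp: bij_betw_def)
  finally show ?thesis .
qed

lemma expectation_Ulaw_Rnd:
  assumes "b > 0"
  shows "measure_pmf.expectation (Ulaw b n) (\<lambda>U. F (Rnd b n U)) =
    (\<Sum>k<b ^ n. F k) / real b ^ n"
proof -
  have "measure_pmf.expectation (Ulaw b n) (\<lambda>U. F (Rnd b n U))
      = measure_pmf.expectation (map_pmf (Rnd b n) (Ulaw b n)) F"
    by simp
  also have "\<dots> = (\<Sum>k<b ^ n. F k) / real b ^ n"
    using assms by (simp add: map_Rnd_Ulaw integral_pmf_of_set[of "{0..<b ^ n}"])
      (simp add: atLeast0LessThan)
  finally show ?thesis .
qed

lemma periodic_shift_nat:
  fixes \<phi> :: "real \<Rightarrow> 'a"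
  assumes "\<And>x. \<phi> (x + 1) = \<phi> x"
  shows "\<phi> (x + real N) = \<phi> x"
proof (induction N)
  case (Suc N)
  have "\<phi> (x + real (Suc N)) = \<phi> ((x + real N) + 1)"
    by (simp add: algebra_simps)
  then show ?case using assms Suc by simp
qed simp

lemma lam_mod_power:
  assumes per: "\<And>x. \<phi> (x + 1) = \<phi> x" and "b > 0"
  shows "lam b \<phi> m (k mod b ^ m) = lam b \<phi> m k"
proof -
  let ?q = "k div b ^ m" and ?r = "k mod b ^ m"
  have pos: "real b ^ m > 0" using assms(2) by simp
  have k: "real k = real ?r + real ?q * real b ^ m"
    by (metis mod_div_mult_eq of_nat_add of_nat_mult of_nat_power)
  have "real k / real b ^ m = real ?r / real b ^ m + real ?q"
    and "(real k + 1) / real b ^ m = (real ?r + 1) / real b ^ m + real ?q"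
    using pos by (simp_all add: k field_simps)
  then show ?thesis
    by (simp add: lam_def periodic_shift_nat[of \<phi>, OF per])
qed

lemma fser_at_grid:
  assumes vanish: "\<And>k::int. \<phi> (of_int k) = 0" and "b > 0"
  shows "fser b \<xi> \<psi> \<phi> (real j / real b ^ n) =
    (\<Sum>m<n. \<xi> m * \<psi> (1 / real b ^ m) * \<phi> (real b ^ m * (real j / real b ^ n)))"
  unfolding fser_def
proof (rule suminf_finite)
  fix m assume "m \<notin> {..<n}"
  then have "real b ^ m * (real j / real b ^ n) = real b ^ (m - n) * real j"
    using assms(2) by (simp add: power_diff)
  also have "\<dots> = of_int (int (b ^ (m - n) * j))"
    by simp
  finally show "\<xi> m * \<psi> (1 / real b ^ m) * \<phi> (real b ^ m * (real j / real b ^ n)) = 0"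
    using vanish[of "int (b ^ (m - n) * j)"] by simp
qed simp

lemma fser_increment:
  assumes vanish: "\<And>k::int. \<phi> (of_int k) = 0" and b: "b > 0"
  shows "fser b \<xi> \<psi> \<phi> ((real k + 1) / real b ^ n) - fser b \<xi> \<psi> \<phi> (real k / real b ^ n) =
    (\<Sum>m=1..n. \<xi> (n - m) * \<psi> (1 / real b ^ (n - m)) / real b ^ m * lam b \<phi> m k)"
proof -
  define g where "g m = \<xi> m * \<psi> (1 / real b ^ m) *
    (\<phi> (real b ^ m * ((real k + 1) / real b ^ n)) - \<phi> (real b ^ m * (real k / real b ^ n)))" for m
  have "fser b \<xi> \<psi> \<phi> ((real k + 1) / real b ^ n) - fser b \<xi> \<psi> \<phi> (real k / real b ^ n) =
      (\<Sum>m<n. g m)"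
    using fser_at_grid[of \<phi> b \<xi> \<psi> "Suc k" n] fser_at_grid[of \<phi> b \<xi> \<psi> k n] vanish b
    by (simp add: g_def sum_subtractf algebra_simps)
  also have "\<dots> = (\<Sum>m=1..n. g (n - m))"
    by (rule sum.reindex_bij_witness[of _ "\<lambda>m. n - m" "\<lambda>m. n - m"]) auto
  also have "\<dots> = (\<Sum>m=1..n. \<xi> (n - m) * \<psi> (1 / real b ^ (n - m)) / real b ^ m * lam b \<phi> m k)"
  proof (rule sum.cong[OF refl])
    fix m assume "m \<in> {1..n}"
    then have scale: "real b ^ (n - m) * (x / real b ^ n) = x / real b ^ m" for x
      using b by (simp add: power_diff field_simps)
    show "g (n - m) = \<xi> (n - m) * \<psi> (1 / real b ^ (n - m)) / real b ^ m * lam b \<phi> m k"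
      unfolding g_def scale lam_def using b by simp
  qed
  finally show ?thesis .
qed

lemma pvar_1_eq_sum:
  assumes "b > 0"
  shows "pvar b p 1 n g =
    (\<Sum>k<b ^ n. \<bar>g ((real k + 1) / real b ^ n) - g (real k / real b ^ n)\<bar> powr p)"
proof -
  have pos: "real b ^ n > 0" using assms by simp
  have "nat \<lfloor>1 * real b ^ n\<rfloor> = b ^ n"
    by (metis floor_of_nat mult_1 nat_int of_nat_power)
  then have "pvar b p 1 n g =
      (\<Sum>k\<in>insert (b ^ n) {..<b ^ n}.
        \<bar>g (min 1 ((real k + 1) / real b ^ n)) - g (min 1 (real k / real b ^ n))\<bar> powr p)"
    by (simp add: pvar_def atLeast0AtMost lessThan_Suc_atMost[symmetric])
  also have "\<dots> = (\<Sum>k<b ^ n.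
        \<bar>g (min 1 ((real k + 1) / real b ^ n)) - g (min 1 (real k / real b ^ n))\<bar> powr p)"
    using pos by (simp add: min_def field_simps)
  also have "\<dots> = (\<Sum>k<b ^ n. \<bar>g ((real k + 1) / real b ^ n) - g (real k / real b ^ n)\<bar> powr p)"
  proof (rule sum.cong[OF refl])
    fix k assume "k \<in> {..<b ^ n}"
    then have "real k + 1 \<le> real b ^ n"
      by (metis lessThan_iff of_nat_Suc of_nat_le_iff of_nat_power Suc_leI add.commute)
    moreover have "real k \<le> real b ^ n"
      using calculation by linarith
    ultimately have "(real k + 1) / real b ^ n \<le> 1" "real k / real b ^ n \<le> 1"
      using pos by (simp_all only: divide_le_eq_1_pos)
    then show "\<bar>g (min 1 ((real k + 1) / real b ^ n)) - g (min 1 (real k / real b ^ n))\<bar> powr p =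
        \<bar>g ((real k + 1) / real b ^ n) - g (real k / real b ^ n)\<bar> powr p"
      using pos by (simp add: min_absorb2)
  qed
  finally show ?thesis .
qed

lemma Yrv_eq_lam_Rnd:
  assumes per: "\<And>x. \<phi> (x + 1) = \<phi> x" and b: "b > 0"
    and U: "U \<in> set_pmf (Ulaw b n)" and "m \<le> n"
  shows "Yrv b \<phi> m U = lam b \<phi> m (Rnd b n U)"
proof -
  have "U i < b" if "i \<in> {1..m}" for i
    using U b that \<open>m \<le> n\<close> by (auto simp: Ulaw_def set_Pi_pmf PiE_dflt_def)
  then have "Rnd b m U = Rnd b n U mod b ^ m"
    using Rnd_mod_power[OF \<open>m \<le> n\<close>] by simp
  then show ?thesis
    by (simp add: Yrv_def lam_mod_power[of \<phi>, OF per b])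
qed

lemma pvar_fser_eq_expectation:
  assumes per: "\<And>x. \<phi> (x + 1) = \<phi> x" and vanish: "\<And>k::int. \<phi> (of_int k) = 0"
    and b: "b > 0"
  shows "pvar b p 1 n (fser b \<xi> \<psi> \<phi>) =
    real b ^ n * measure_pmf.expectation (Ulaw b n)
      (\<lambda>U. \<bar>\<Sum>m=1..n. \<xi> (n - m) * \<psi> (1 / real b ^ (n - m)) / real b ^ m * Yrv b \<phi> m U\<bar> powr p)"
proof -
  define c where "c m = \<xi> (n - m) * \<psi> (1 / real b ^ (n - m)) / real b ^ m" for m
  define F where "F k = \<bar>\<Sum>m=1..n. c m * lam b \<phi> m k\<bar> powr p" for k
  have "pvar b p 1 n (fser b \<xi> \<psi> \<phi>) = (\<Sum>k<b ^ n. F k)"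
    by (simp add: pvar_1_eq_sum fser_increment[of \<phi>, OF vanish b] b F_def c_def)
  also have "\<dots> = real b ^ n * measure_pmf.expectation (Ulaw b n) (\<lambda>U. F (Rnd b n U))"
    using b by (simp add: expectation_Ulaw_Rnd)
  also have "measure_pmf.expectation (Ulaw b n) (\<lambda>U. F (Rnd b n U)) =
      measure_pmf.expectation (Ulaw b n) (\<lambda>U. \<bar>\<Sum>m=1..n. c m * Yrv b \<phi> m U\<bar> powr p)"
    by (intro integral_cong_AE AE_pmfI) (auto simp: F_def Yrv_eq_lam_Rnd[of \<phi>, OF per b])
  finally show ?thesis
    by (simp add: c_def)
qed

lemma multiplicative_power:
  fixes \<psi> :: "real \<Rightarrow> real"
  assumes mult: "\<forall>x y. x > 0 \<longrightarrow> y > 0 \<longrightarrow> \<psi> (x * y) = \<psi> x * \<psi> y"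
    and "x > 0" and "\<psi> x \<noteq> 0"
  shows "\<psi> (x ^ k) = \<psi> x ^ k"
proof (induction k)
  case 0
  have "\<psi> x = \<psi> x * \<psi> 1"
    using mult \<open>x > 0\<close> by (metis mult.right_neutral zero_less_one)
  then show ?case using \<open>\<psi> x \<noteq> 0\<close> by simp
next
  case (Suc k)
  then show ?case using mult \<open>x > 0\<close> by simp
qed

lemma pvar_fser_eq_expectation_multiplicative:
  assumes per: "\<And>x. \<phi> (x + 1) = \<phi> x" and vanish: "\<And>k::int. \<phi> (of_int k) = 0"
    and b: "b > 0"
    and mult: "\<forall>x y. x > 0 \<longrightarrow> y > 0 \<longrightarrow> \<psi> (x * y) = \<psi> x * \<psi> y"
    and psi_pos: "\<psi> (1 / real b) > 0"
  shows "pvar b p 1 n (fser b \<xi> \<psi> \<phi>) =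
    (\<psi> (1 / real b) powr p * real b) ^ n * measure_pmf.expectation (Ulaw b n)
      (\<lambda>U. \<bar>\<Sum>m=1..n. \<xi> (n - m) / (\<psi> (1 / real b) * real b) ^ m * Yrv b \<phi> m U\<bar> powr p)"
proof -
  define q where "q = \<psi> (1 / real b)"
  define S where "S U = (\<Sum>m=1..n. \<xi> (n - m) / (q * real b) ^ m * Yrv b \<phi> m U)" for U
  have "q > 0" using psi_pos by (simp add: q_def)
  have scale: "\<xi> (n - m) * \<psi> (1 / real b ^ (n - m)) / real b ^ m * y =
      q ^ n * (\<xi> (n - m) / (q * real b) ^ m * y)"
    if "m \<le> n" for m y
  proof -
    have "\<psi> (1 / real b ^ (n - m)) = q ^ (n - m)"
      using multiplicative_power[OF mult, of "1 / real b"] b psi_pos by (simp add: q_def power_one_over)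
    moreover have "q ^ n = q ^ (n - m) * q ^ m"
      using that by (simp flip: power_add)
    ultimately show ?thesis
      using \<open>q > 0\<close> b by (simp add: power_mult_distrib)
  qed
  have "\<bar>\<Sum>m=1..n. \<xi> (n - m) * \<psi> (1 / real b ^ (n - m)) / real b ^ m * Yrv b \<phi> m U\<bar> powr p
      = (q powr p) ^ n * \<bar>S U\<bar> powr p" for U
  proof -
    have "(\<Sum>m=1..n. \<xi> (n - m) * \<psi> (1 / real b ^ (n - m)) / real b ^ m * Yrv b \<phi> m U) =
        q ^ n * S U"
      unfolding S_def sum_distrib_left by (intro sum.cong refl scale) simp
    moreover have "(q ^ n) powr p = (q powr p) ^ n"
      using \<open>q > 0\<close> by (simp add: powr_realpow[symmetric] powr_powr mult.commute)
    ultimately show ?thesis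
      using \<open>q > 0\<close> by (simp add: abs_mult powr_mult)
  qed
  then have "pvar b p 1 n (fser b \<xi> \<psi> \<phi>) =
      real b ^ n * ((q powr p) ^ n * measure_pmf.expectation (Ulaw b n) (\<lambda>U. \<bar>S U\<bar> powr p))"
    by (simp add: pvar_fser_eq_expectation[OF per vanish b])
  then show ?thesis
    by (simp add: S_def q_def power_mult_distrib mult_ac)
qed

theorem lemma2p4:
  fixes b :: nat and \<xi> :: "nat \<Rightarrow> real" and \<phi> \<psi> :: "real \<Rightarrow> real" and \<gamma> :: real
  assumes b: "b \<ge> 2"
    and xi: "\<And>m. \<xi> m \<in> {-1, 1}"
    and per: "\<And>x. \<phi> (x + 1) = \<phi> x"
    and vanish: "\<And>k::int. \<phi> (of_int k) = 0"
    and gam: "0 < \<gamma>" "\<gamma> \<le> 1"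
    and hoelder: "\<exists>C. \<forall>x y. \<bar>\<phi> x - \<phi> y\<bar> \<le> C * \<bar>x - y\<bar> powr \<gamma>"
    and psi_pos: "\<And>x. x > 0 \<Longrightarrow> \<psi> x > 0"
    and psi_sub: "\<And>x y. x > 0 \<Longrightarrow> y > 0 \<Longrightarrow> \<psi> (x * y) \<le> \<psi> x * \<psi> y"
    and psi_b: "0 < \<psi> (1 / real b)" "\<psi> (1 / real b) < 1"
  shows "(\<forall>n::nat. \<forall>p::real. n \<ge> 1 \<longrightarrow> p \<ge> 1 \<longrightarrow>
            pvar b p 1 n (fser b \<xi> \<psi> \<phi>) =
              real b ^ n * measure_pmf.expectation (Ulaw b n)
                (\<lambda>U. \<bar>\<Sum>m=1..n. \<xi> (n - m) * \<psi> (1 / real b ^ (n - m)) / real b ^ m * Yrv b \<phi> m U\<bar> powr p))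
       \<and> ((\<forall>x y. x > 0 \<longrightarrow> y > 0 \<longrightarrow> \<psi> (x * y) = \<psi> x * \<psi> y) \<longrightarrow>
          (\<forall>n::nat. \<forall>p::real. n \<ge> 1 \<longrightarrow> p \<ge> 1 \<longrightarrow>
            pvar b p 1 n (fser b \<xi> \<psi> \<phi>) =
              (\<psi> (1 / real b) powr p * real b) ^ n * measure_pmf.expectation (Ulaw b n)
                (\<lambda>U. \<bar>\<Sum>m=1..n. \<xi> (n - m) / (\<psi> (1 / real b) * real b) ^ m * Yrv b \<phi> m U\<bar> powr p)))"
proof -
  have "b > 0" using b by simp
  then show ?thesis
    using pvar_fser_eq_expectation[of \<phi>, OF per vanish]
      pvar_fser_eq_expectation_multiplicative[where \<phi> = \<phi> and \<psi> = \<psi>, OF per vanish _ _ psi_b(1)]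
    by blast
qed

end
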